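(* Let $a,b,c$ be nonzero and $G_1,G_2$ parameters, and define the transformation (a Dehn twist, obtained as a composition of two generalized mutations) $$a'=\frac{b^2+c^2+G_1bc}{a},\qquad b'=\frac{(a')^2+c^2+G_2a'c}{b},\qquad c'=c.$$ Then the function $$G_\gamma=G_2\frac{c}{b}+G_1\frac{c}{a}+\frac{a}{b}+\frac{b}{a}+\frac{c^2}{ab}$$ is preserved by this transformation, i.e. $G_\gamma(a',b',c)=G_\gamma(a,b,c)$.
   Context: Here $a,b,c$ are $\lambda$-lengths of arcs on a Riemann sphere with three holes and two bordered cusps on one hole ($PV$ case), $G_1,G_2$ encode the perimeters of the two uncusped holes, and $G_\gamma$ is the geodesic function of the closed geodesic $\gamma$ encircling these two holes. The claim is an identity of rational functions. *)

theory Defs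
  imports Complex_Main
begin

definition Ggamma :: "real \<Rightarrow> real \<Rightarrow> real \<Rightarrow> real \<Rightarrow> real \<Rightarrow> real" where
  "Ggamma G1 G2 a b c = G2 * c / b + G1 * c / a + a / b + b / a + c^2 / (a * b)"

definition twist_a :: "real \<Rightarrow> real \<Rightarrow> real \<Rightarrow> real \<Rightarrow> real" where
  "twist_a G1 a b c = (b^2 + c^2 + G1 * b * c) / a"

definition twist_b :: "real \<Rightarrow> real \<Rightarrow> real \<Rightarrow> real \<Rightarrow> real \<Rightarrow> real" where
  "twist_b G1 G2 a b c = ((twist_a G1 a b c)^2 + c^2 + G2 * twist_a G1 a b c * c) / b"

end

theory Submission
  imports Defs
begin

text \<open>Vieta jumping. Since \<open>a b G\<^sub>\<gamma> = a\<^sup>2 + G\<^sub>2 c a + (b\<^sup>2 + c\<^sup>2 + G\<^sub>1 b c)\<close> is a monic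
  quadratic in \<open>a\<close> for fixed \<open>b, c\<close> and fixed value of \<open>G\<^sub>\<gamma>\<close>, the mutation \<open>a \<mapsto> a'\<close> exchanges
  its two roots (their product is the constant term) and preserves \<open>G\<^sub>\<gamma>\<close>. As \<open>G\<^sub>\<gamma>\<close> is
  symmetric under \<open>(a, G\<^sub>1) \<leftrightarrow> (b, G\<^sub>2)\<close>, the second mutation is the same jump in \<open>b\<close>.\<close>

lemma Ggamma_swap: "Ggamma G1 G2 a b c = Ggamma G2 G1 b a c"
  unfolding Ggamma_def by (simp add: mult.commute)

lemma Ggamma_twist_a:
  assumes "a \<noteq> 0" and "b \<noteq> 0" and "twist_a G1 a b c \<noteq> 0"
  shows "Ggamma G1 G2 (twist_a G1 a b c) b c = Ggamma G1 G2 a b c"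
proof -
  define a' where "a' = twist_a G1 a b c"
  have a'0: "a' \<noteq> 0" using assms(3) by (simp add: a'_def)
  have vieta: "a' * a = b^2 + c^2 + G1 * b * c"
    using assms(1) by (simp add: a'_def twist_a_def)
  have "Ggamma G1 G2 a' b c - Ggamma G1 G2 a b c = (a' - a) * (a' * a - (b^2 + c^2 + G1 * b * c)) / (a' * a * b)"
    using assms(1,2) a'0 unfolding Ggamma_def by (simp add: field_simps) algebra
  then show ?thesis using vieta by (simp add: a'_def)
qed

lemma twist_b_eq_twist_a: "twist_b G1 G2 a b c = twist_a G2 b (twist_a G1 a b c) c"
  unfolding twist_b_def twist_a_def by (simp add: mult.commute mult.left_commute)

theorem mainTheorem10:
  fixes a b c G1 G2 :: real
  assumes "a \<noteq> 0" and "b \<noteq> 0" and "c \<noteq> 0"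
    and "twist_a G1 a b c \<noteq> 0" and "twist_b G1 G2 a b c \<noteq> 0"
  shows "Ggamma G1 G2 (twist_a G1 a b c) (twist_b G1 G2 a b c) c = Ggamma G1 G2 a b c"
proof -
  let ?a' = "twist_a G1 a b c"
  have "Ggamma G1 G2 ?a' (twist_b G1 G2 a b c) c = Ggamma G2 G1 (twist_a G2 b ?a' c) ?a' c"
    by (simp add: Ggamma_swap twist_b_eq_twist_a)
  also have "\<dots> = Ggamma G2 G1 b ?a' c"
    using assms(2,4,5) by (simp add: Ggamma_twist_a twist_b_eq_twist_a)
  also have "\<dots> = Ggamma G1 G2 ?a' b c"
    by (simp add: Ggamma_swap)
  also have "\<dots> = Ggamma G1 G2 a b c"
    using assms(1,2,4) by (rule Ggamma_twist_a)
  finally show ?thesis .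
qed

end
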